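(* Let $G$ be a maximal outerplanar graph with at least four vertices (with a fixed outerplanar embedding). Let $uv$ be an edge on the outer face of $G$ with $\deg_G(u)>2$ and $\deg_G(v)>2$, and let $w=\Delta(uv)$. Let $G_u=G_u(uv)$ and $G_v=G_v(uv)$ be the $uv$-segments. Then $$\mathrm{mvc}(G)=\min\{\mathrm{mvc}_{w}(G_u)+\mathrm{mvc}_{vw}(G_v)-1,\ \mathrm{mvc}_{uw}(G_u)+\mathrm{mvc}_{w}(G_v)-1,\ \mathrm{mvc}(G_u)+\mathrm{mvc}(G_v)\}.$$
   Context: All graphs are finite and simple. A maximal outerplanar graph is an outerplanar graph to which no edge between existing vertices can be added while keeping it outerplanar. A fixed outerplanar embedding, with all vertices on the outer face, is assumed. For $S\subseteq V(G)$, $\mathrm{mvc}_S(G)$ is the minimum size of a vertex cover of $G$ containing $S$, and $\mathrm{mvc}(G)=\mathrm{mvc}_\emptyset(G)$. Braces are dropped for small sets, e.g. $\mathrm{mvc}_{uw}(G)=\mathrm{mvc}_{\{u,w\}}(G)$. For a maximal outerplanar graph with at least three vertices and an edge $uv$ on its outer face, $\Delta(uv)$ denotes the unique common neighbor of $u$ and $v$. $uv$-segments: let $w=\Delta(uv)$. $G_u(uv)$ is the maximal biconnected outerplanar subgraph of $G$ that has $uw$ on its outer face and does not contain $v$. Equivalently, it is the subgraph induced by $u$, $w$ and the vertices lying on the side of the edge $uw$ that does not contain $v$. It is the single edge $uw$ if $\deg_G(u)=2$. $G_v(uv)$ is defined symmetrically with the roles of $u$ and $v$ exchanged. $G_u$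 and $G_v$ are themselves maximal outerplanar graphs with outer edges $uw$ and $vw$ respectively. *)

theory Defs
  imports Main
begin

definition graph :: "'a set \<Rightarrow> 'a set set \<Rightarrow> bool" where
  "graph V E \<longleftrightarrow> finite V \<and> (\<forall>e\<in>E. \<exists>x y. e = {x, y} \<and> x \<noteq> y \<and> x \<in> V \<and> y \<in> V)"

definition degree :: "'a set set \<Rightarrow> 'a \<Rightarrow> nat" where
  "degree E x = card {y. {x, y} \<in> E}"

text \<open>Outerplanar embedding, combinatorially: the vertices are placed in cyclic order
  (positions 0..n-1 on a circle), and no two edges cross as chords.\<close>
definition crossing :: "('a \<Rightarrow> nat) \<Rightarrow> 'a set \<Rightarrow> 'a set \<Rightarrow> bool" where
  "crossing f e1 e2 \<longleftrightarrow> (\<exists>a b c d. e1 = {a, b} \<and> e2 = {c, d} \<and> f a < f c \<and> f c < f b \<and> f b < f d)"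

definition outerplanar_embedding :: "'a set \<Rightarrow> 'a set set \<Rightarrow> ('a \<Rightarrow> nat) \<Rightarrow> bool" where
  "outerplanar_embedding V E f \<longleftrightarrow> graph V E \<and> bij_betw f V {0..<card V} \<and>
     (\<forall>e1\<in>E. \<forall>e2\<in>E. \<not> crossing f e1 e2)"

definition outerplanar :: "'a set \<Rightarrow> 'a set set \<Rightarrow> bool" where
  "outerplanar V E \<longleftrightarrow> (\<exists>f. outerplanar_embedding V E f)"

definition maximal_outerplanar :: "'a set \<Rightarrow> 'a set set \<Rightarrow> bool" where
  "maximal_outerplanar V E \<longleftrightarrow> graph V E \<and> outerplanar V E \<and>
     (\<forall>x\<in>V. \<forall>y\<in>V. x \<noteq> y \<longrightarrow> {x, y} \<notin> E \<longrightarrow> \<not> outerplanar V (insert {x, y} E))"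

text \<open>Edges on the outer face of the embedding: edges joining cyclically consecutive vertices.\<close>
definition outer_edge :: "'a set \<Rightarrow> 'a set set \<Rightarrow> ('a \<Rightarrow> nat) \<Rightarrow> 'a \<Rightarrow> 'a \<Rightarrow> bool" where
  "outer_edge V E f u v \<longleftrightarrow> u \<in> V \<and> v \<in> V \<and> {u, v} \<in> E \<and>
     (f v = (f u + 1) mod card V \<or> f u = (f v + 1) mod card V)"

definition Delta :: "'a set \<Rightarrow> 'a set set \<Rightarrow> 'a \<Rightarrow> 'a \<Rightarrow> 'a" where
  "Delta V E u v = (THE w. w \<in> V \<and> {u, w} \<in> E \<and> {v, w} \<in> E)"

text \<open>Positions strictly inside the cyclic arc going forward from position a to position c.\<close>
definition open_arc :: "nat \<Rightarrow> nat \<Rightarrow> nat \<Rightarrow> nat set" where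
  "open_arc n a c = {b. 0 < (int b - int a) mod int n \<and> (int b - int a) mod int n < (int c - int a) mod int n}"

text \<open>Vertices lying strictly on the side of the chord xw that does not contain y.\<close>
definition side_without :: "'a set \<Rightarrow> ('a \<Rightarrow> nat) \<Rightarrow> 'a \<Rightarrow> 'a \<Rightarrow> 'a \<Rightarrow> 'a set" where
  "side_without V f x w y =
     (let n = card V;
          A1 = {z\<in>V. f z \<in> open_arc n (f x) (f w)};
          A2 = {z\<in>V. f z \<in> open_arc n (f w) (f x)}
      in if y \<in> A1 then A2 else A1)"

definition induced_edges :: "'a set set \<Rightarrow> 'a set \<Rightarrow> 'a set set" where
  "induced_edges E W = {e\<in>E. e \<subseteq> W}"

text \<open>The segment G_x(xy) (for an outer edge xy, with w = Delta(xy)): vertex set and edge set.\<close>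
definition seg_V :: "'a set \<Rightarrow> 'a set set \<Rightarrow> ('a \<Rightarrow> nat) \<Rightarrow> 'a \<Rightarrow> 'a \<Rightarrow> 'a set" where
  "seg_V V E f x y = {x, Delta V E x y} \<union> side_without V f x (Delta V E x y) y"

definition seg_E :: "'a set \<Rightarrow> 'a set set \<Rightarrow> ('a \<Rightarrow> nat) \<Rightarrow> 'a \<Rightarrow> 'a \<Rightarrow> 'a set set" where
  "seg_E V E f x y = induced_edges E (seg_V V E f x y)"

definition vertex_cover :: "'a set \<Rightarrow> 'a set set \<Rightarrow> 'a set \<Rightarrow> bool" where
  "vertex_cover V E C \<longleftrightarrow> C \<subseteq> V \<and> (\<forall>e\<in>E. e \<inter> C \<noteq> {})"

definition mvc_S :: "'a set \<Rightarrow> 'a set set \<Rightarrow> 'a set \<Rightarrow> nat" where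
  "mvc_S V E S = (LEAST k. \<exists>C. vertex_cover V E C \<and> S \<subseteq> C \<and> card C = k)"

definition mvc :: "'a set \<Rightarrow> 'a set set \<Rightarrow> nat" where
  "mvc V E = mvc_S V E {}"

end

theory Submission
  imports Defs
begin

text \<open>Let x be the neighbour of v other than u that comes last in the cyclic order
  starting u, v. The chord ux crosses no edge, so by maximality it is an edge, and x is the
  unique common neighbour w of u and v. The triangle uvw splits G into the segments G_u and
  G_v, which share only w, and uv is the only edge between them. A cover of G restricts to
  covers of both segments that overlap exactly when they contain w, and then one of them
  contains u or v; conversely covers of the segments glue to a cover of G. Counting vertices
  gives the three-term minimum. To make the cyclic order linear, the embedding is first
  rotated so that u and v sit at positions 0 and 1.\<close>

section \<open>Vertex covers of a graph split along a triangle\<close>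

lemma graph_edge_vertices:
  assumes "graph V E" "{x, y} \<in> E"
  shows "x \<in> V" "y \<in> V" "x \<noteq> y"
proof -
  obtain a b where "{x, y} = {a, b}" "a \<noteq> b" "a \<in> V" "b \<in> V"
    using assms unfolding graph_def by blast
  then show "x \<in> V" "y \<in> V" "x \<noteq> y"
    by (auto simp: doubleton_eq_iff)
qed

lemma graph_edge_subset:
  assumes "graph V E" "e \<in> E"
  shows "e \<subseteq> V"
proof -
  obtain a b where "e = {a, b}" "a \<in> V" "b \<in> V"
    using assms unfolding graph_def by blast
  then show ?thesis by simp
qed

lemma graph_induced_edges:
  assumes "graph V E" "W \<subseteq> V"
  shows "graph W (induced_edges E W)"
  unfolding graph_def
proof (intro conjI ballI)
  show "finite W"
    using assms finite_subset unfolding graph_def by blast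
  fix e assume "e \<in> induced_edges E W"
  then have "e \<in> E" "e \<subseteq> W"
    unfolding induced_edges_def by auto
  moreover obtain x y where "e = {x, y}" "x \<noteq> y"
    using \<open>e \<in> E\<close> assms(1) unfolding graph_def by blast
  ultimately show "\<exists>x y. e = {x, y} \<and> x \<noteq> y \<and> x \<in> W \<and> y \<in> W"
    by auto
qed

lemma vertex_cover_restrict:
  "vertex_cover V E C \<Longrightarrow> W \<subseteq> V \<Longrightarrow> vertex_cover W (induced_edges E W) (C \<inter> W)"
  unfolding vertex_cover_def induced_edges_def by blast

lemma mvc_S_le: "vertex_cover V E C \<Longrightarrow> S \<subseteq> C \<Longrightarrow> mvc_S V E S \<le> card C"
  unfolding mvc_S_def by (rule Least_le) blast

lemma mvc_S_attained:
  assumes "graph V E" "S \<subseteq> V"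
  obtains C where "vertex_cover V E C" "S \<subseteq> C" "card C = mvc_S V E S"
proof -
  have "vertex_cover V E V"
    using assms(1) unfolding graph_def vertex_cover_def by blast
  then have "\<exists>k C. vertex_cover V E C \<and> S \<subseteq> C \<and> card C = k"
    using assms(2) by blast
  from LeastI_ex[OF this] show thesis
    using that unfolding mvc_S_def by blast
qed

locale split_graph =
  fixes V :: "'a set" and E :: "'a set set" and Vu Vv :: "'a set" and u v w :: 'a
  assumes graph: "graph V E"
    and union: "Vu \<union> Vv = V" and inter: "Vu \<inter> Vv = {w}"
    and u_in: "u \<in> Vu" and v_in: "v \<in> Vv"
    and uv_edge: "{u, v} \<in> E" and uw_edge: "{u, w} \<in> E" and vw_edge: "{v, w} \<in> E"
    and edges_split: "\<forall>e\<in>E. e \<subseteq> Vu \<or> e \<subseteq> Vv \<or> e = {u, v}"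
begin

abbreviation "Eu \<equiv> induced_edges E Vu"
abbreviation "Ev \<equiv> induced_edges E Vv"

lemma swap: "split_graph V E Vv Vu v u w"
  using graph union inter u_in v_in uv_edge uw_edge vw_edge edges_split
  unfolding split_graph_def by (auto simp: insert_commute)

lemma w_in: "w \<in> Vu" "w \<in> Vv"
  using inter by auto

lemma graph_Eu: "graph Vu Eu" and graph_Ev: "graph Vv Ev"
  using graph_induced_edges[OF graph] union by auto

lemma cover_subset: "vertex_cover Vu Eu X \<Longrightarrow> X \<subseteq> Vu" "vertex_cover Vv Ev Y \<Longrightarrow> Y \<subseteq> Vv"
  unfolding vertex_cover_def by auto

lemma card_Un_covers:
  assumes "X \<subseteq> Vu" "Y \<subseteq> Vv"
  shows "card (X \<union> Y) + card (X \<inter> Y) = card X + card Y"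
proof -
  have "finite V" using graph unfolding graph_def by simp
  then have "finite X" "finite Y" using assms union by (auto intro: finite_subset)
  then show ?thesis by (rule card_Un_Int[symmetric])
qed

lemma vertex_cover_Un:
  assumes X: "vertex_cover Vu Eu X" and Y: "vertex_cover Vv Ev Y"
    and uv: "u \<in> X \<union> Y \<or> v \<in> X \<union> Y"
  shows "vertex_cover V E (X \<union> Y)"
  unfolding vertex_cover_def
proof (intro conjI ballI)
  show "X \<union> Y \<subseteq> V"
    using X Y union unfolding vertex_cover_def by auto
next
  fix e assume "e \<in> E"
  then consider "e \<in> Eu" | "e \<in> Ev" | "e = {u, v}"
    using edges_split unfolding induced_edges_def by blast
  then show "e \<inter> (X \<union> Y) \<noteq> {}"
    using X Y uv unfolding vertex_cover_def by cases auto
qed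

lemma mvc_le_glued:
  assumes X: "vertex_cover Vu Eu X" and Y: "vertex_cover Vv Ev Y"
    and w: "w \<in> X" "w \<in> Y" and uv: "u \<in> X \<or> v \<in> Y"
  shows "mvc V E + 1 \<le> card X + card Y"
proof -
  have "X \<inter> Y = {w}"
    using cover_subset(1)[OF X] cover_subset(2)[OF Y] inter w by blast
  then show ?thesis
    using card_Un_covers[OF cover_subset(1)[OF X] cover_subset(2)[OF Y]]
      mvc_S_le[OF vertex_cover_Un[OF X Y], of "{}"] uv
    unfolding mvc_def by auto
qed

lemma mvc_le_add:
  assumes X: "vertex_cover Vu Eu X" and Y: "vertex_cover Vv Ev Y"
  shows "mvc V E \<le> card X + card Y"
proof (cases "w \<in> X \<and> w \<in> Y")
  case True
  have X': "vertex_cover Vu Eu (insert u X)"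
    using X u_in unfolding vertex_cover_def by auto
  have "mvc V E + 1 \<le> card (insert u X) + card Y"
    using mvc_le_glued[OF X' Y] True by auto
  also have "\<dots> \<le> card X + 1 + card Y"
    by (cases "finite X") (auto simp: card_insert_if)
  finally show ?thesis by simp
next
  case False
  have "X \<inter> Y \<subseteq> {w}"
    using cover_subset(1)[OF X] cover_subset(2)[OF Y] inter by blast
  with False have disjoint: "X \<inter> Y = {}"
    by blast
  have "{u, w} \<in> Eu" "{v, w} \<in> Ev"
    using uw_edge vw_edge u_in v_in w_in unfolding induced_edges_def by auto
  then have "{u, w} \<inter> X \<noteq> {}" "{v, w} \<inter> Y \<noteq> {}"
    using X Y unfolding vertex_cover_def by auto
  then have "u \<in> X \<or> w \<in> X" "v \<in> Y \<or> w \<in> Y"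
    by auto
  with False have "u \<in> X \<union> Y \<or> v \<in> X \<union> Y"
    by blast
  then have "mvc V E \<le> card (X \<union> Y)"
    using mvc_S_le[OF vertex_cover_Un[OF X Y], of "{}"] unfolding mvc_def by auto
  then show ?thesis
    using card_Un_covers[OF cover_subset(1)[OF X] cover_subset(2)[OF Y]] disjoint by simp
qed

lemma mvc_ge_split:
  "mvc_S Vu Eu {w} + mvc_S Vv Ev {v, w} \<le> mvc V E + 1 \<or>
   mvc_S Vu Eu {u, w} + mvc_S Vv Ev {w} \<le> mvc V E + 1 \<or>
   mvc Vu Eu + mvc Vv Ev \<le> mvc V E"
proof -
  obtain C where C: "vertex_cover V E C" "card C = mvc V E"
    using mvc_S_attained[OF graph, of "{}"] unfolding mvc_def by auto
  define X where "X = C \<inter> Vu"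
  define Y where "Y = C \<inter> Vv"
  have X: "vertex_cover Vu Eu X" and Y: "vertex_cover Vv Ev Y"
    unfolding X_def Y_def using vertex_cover_restrict[OF C(1)] union by auto
  have "C = X \<union> Y" "X \<inter> Y = C \<inter> {w}"
    using C(1) union inter unfolding X_def Y_def vertex_cover_def by auto
  then have card_C: "card C + card (C \<inter> {w}) = card X + card Y"
    using card_Un_covers[OF cover_subset(1)[OF X] cover_subset(2)[OF Y]] by simp
  have "{u, v} \<inter> C \<noteq> {}"
    using C(1) uv_edge unfolding vertex_cover_def by auto
  then have "u \<in> C \<or> v \<in> C"
    by auto
  then consider "w \<in> C" "v \<in> C" | "w \<in> C" "u \<in> C" | "w \<notin> C" by blast
  then show ?thesis
  proof cases
    case 1
    then have "mvc_S Vu Eu {w} \<le> card X" "mvc_S Vv Ev {v, w} \<le> card Y"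
      using mvc_S_le[OF X] mvc_S_le[OF Y] w_in v_in unfolding X_def Y_def by auto
    then show ?thesis using card_C C(2) 1 by auto
  next
    case 2
    then have "mvc_S Vu Eu {u, w} \<le> card X" "mvc_S Vv Ev {w} \<le> card Y"
      using mvc_S_le[OF X] mvc_S_le[OF Y] w_in u_in unfolding X_def Y_def by auto
    then show ?thesis using card_C C(2) 2 by auto
  next
    case 3
    then show ?thesis
      using mvc_S_le[OF X, of "{}"] mvc_S_le[OF Y, of "{}"] card_C C(2) unfolding mvc_def by auto
  qed
qed

theorem mvc_eq:
  "int (mvc V E) =
     min (min (int (mvc_S Vu Eu {w}) + int (mvc_S Vv Ev {v, w}) - 1)
              (int (mvc_S Vu Eu {u, w}) + int (mvc_S Vv Ev {w}) - 1))
         (int (mvc Vu Eu) + int (mvc Vv Ev))"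
proof -
  obtain Xa where Xa: "vertex_cover Vu Eu Xa" "{w} \<subseteq> Xa" "card Xa = mvc_S Vu Eu {w}"
    using mvc_S_attained[OF graph_Eu, of "{w}"] w_in by auto
  obtain Yb where Yb: "vertex_cover Vv Ev Yb" "{v, w} \<subseteq> Yb" "card Yb = mvc_S Vv Ev {v, w}"
    using mvc_S_attained[OF graph_Ev, of "{v, w}"] w_in v_in by auto
  obtain Xc where Xc: "vertex_cover Vu Eu Xc" "{u, w} \<subseteq> Xc" "card Xc = mvc_S Vu Eu {u, w}"
    using mvc_S_attained[OF graph_Eu, of "{u, w}"] w_in u_in by auto
  obtain Yd where Yd: "vertex_cover Vv Ev Yd" "{w} \<subseteq> Yd" "card Yd = mvc_S Vv Ev {w}"
    using mvc_S_attained[OF graph_Ev, of "{w}"] w_in by auto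
  obtain Xe where Xe: "vertex_cover Vu Eu Xe" "card Xe = mvc Vu Eu"
    using mvc_S_attained[OF graph_Eu, of "{}"] unfolding mvc_def by auto
  obtain Yg where Yg: "vertex_cover Vv Ev Yg" "card Yg = mvc Vv Ev"
    using mvc_S_attained[OF graph_Ev, of "{}"] unfolding mvc_def by auto
  have "mvc V E + 1 \<le> mvc_S Vu Eu {w} + mvc_S Vv Ev {v, w}"
    using mvc_le_glued[OF Xa(1) Yb(1)] Xa Yb by auto
  moreover have "mvc V E + 1 \<le> mvc_S Vu Eu {u, w} + mvc_S Vv Ev {w}"
    using mvc_le_glued[OF Xc(1) Yd(1)] Xc Yd by auto
  moreover have "mvc V E \<le> mvc Vu Eu + mvc Vv Ev"
    using mvc_le_add[OF Xe(1) Yg(1)] Xe Yg by auto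
  ultimately show ?thesis
    using mvc_ge_split by (auto simp: min_def)
qed

end

section \<open>Rotating the cyclic order\<close>

definition cyc_shift :: "nat \<Rightarrow> nat \<Rightarrow> nat \<Rightarrow> nat" where
  "cyc_shift n p k = (if p \<le> k then k - p else k + n - p)"

text \<open>The endpoints of the chords ab and cd alternate around the circle; the argument order
  follows crossing.\<close>
definition cyclically_interleaved :: "nat \<Rightarrow> nat \<Rightarrow> nat \<Rightarrow> nat \<Rightarrow> bool" where
  "cyclically_interleaved a c b d \<longleftrightarrow>
     (a < c \<and> c < b \<and> b < d) \<or> (c < b \<and> b < d \<and> d < a) \<or>
     (b < d \<and> d < a \<and> a < c) \<or> (d < a \<and> a < c \<and> c < b)"

lemma cyc_shift_less: "p < n \<Longrightarrow> k < n \<Longrightarrow> cyc_shift n p k < n"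
  unfolding cyc_shift_def by auto

lemma int_diff_mod:
  assumes "a < n" "b < n"
  shows "(int a - int b) mod int n = (if b \<le> a then int a - int b else int a - int b + int n)"
proof (cases "b \<le> a")
  case True
  then show ?thesis using assms by simp
next
  case False
  then have "(int a - int b) mod int n = (int a - int b + int n) mod int n"
    by simp
  also have "\<dots> = int a - int b + int n"
    using assms False by (intro mod_pos_pos_trivial) auto
  finally show ?thesis using False by simp
qed

lemma int_cyc_shift:
  assumes "p < n" "k < n"
  shows "int (cyc_shift n p k) = (int k - int p) mod int n"
  using assms by (simp add: cyc_shift_def int_diff_mod of_nat_diff)

lemma cyc_shift_inj_on: "p < n \<Longrightarrow> inj_on (cyc_shift n p) {0..<n}"
  unfolding inj_on_def cyc_shift_def by auto

lemma bij_betw_cyc_shift: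
  assumes "p < n"
  shows "bij_betw (cyc_shift n p) {0..<n} {0..<n}"
proof -
  have "cyc_shift n p ` {0..<n} = {0..<n}"
    by (rule endo_inj_surj) (auto simp: assms cyc_shift_less cyc_shift_inj_on)
  then show ?thesis
    by (simp add: bij_betw_def assms cyc_shift_inj_on)
qed

lemma cyc_shift_inverse: "p \<le> n \<Longrightarrow> k < n \<Longrightarrow> cyc_shift n (n - p) (cyc_shift n p k) = k"
  unfolding cyc_shift_def by auto

lemma cyc_shift_diff_mod:
  assumes "p < n" "a < n" "b < n"
  shows "(int (cyc_shift n p a) - int (cyc_shift n p b)) mod int n = (int a - int b) mod int n"
  using assms by (simp add: int_cyc_shift mod_diff_eq)

lemma open_arc_cyc_shift:
  assumes "p < n" "a < n" "b < n" "c < n"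
  shows "cyc_shift n p b \<in> open_arc n (cyc_shift n p a) (cyc_shift n p c) \<longleftrightarrow> b \<in> open_arc n a c"
  using assms by (simp add: open_arc_def cyc_shift_diff_mod)

lemma cyclically_interleaved_cyc_shift_sorted:
  assumes "a < c" "c < b" "b < d" "d < n" "p \<le> n"
  shows "cyclically_interleaved (cyc_shift n p a) (cyc_shift n p c) (cyc_shift n p b) (cyc_shift n p d)"
proof -
  consider "p \<le> a" | "a < p" "p \<le> c" | "c < p" "p \<le> b" | "b < p" "p \<le> d" | "d < p"
    by linarith
  then show ?thesis
  proof cases
    case 1
    show ?thesis
      unfolding cyclically_interleaved_def cyc_shift_def by (rule disjI1) (use assms 1 in auto)
  next
    case 2
    show ?thesis
      unfolding cyclically_interleaved_def cyc_shift_def by (rule disjI2, rule disjI1) (use assms 2 in auto)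
  next
    case 3
    show ?thesis
      unfolding cyclically_interleaved_def cyc_shift_def by (rule disjI2, rule disjI2, rule disjI1) (use assms 3 in auto)
  next
    case 4
    show ?thesis
      unfolding cyclically_interleaved_def cyc_shift_def by (rule disjI2, rule disjI2, rule disjI2) (use assms 4 in auto)
  next
    case 5
    show ?thesis
      unfolding cyclically_interleaved_def cyc_shift_def by (rule disjI1) (use assms 5 in auto)
  qed
qed

lemma cyclically_interleaved_cyc_shift:
  assumes "p \<le> n" "a < n" "b < n" "c < n" "d < n" "cyclically_interleaved a c b d"
  shows "cyclically_interleaved (cyc_shift n p a) (cyc_shift n p c) (cyc_shift n p b) (cyc_shift n p d)"
proof -
  from assms(6) consider "a < c" "c < b" "b < d" | "c < b" "b < d" "d < a"
    | "b < d" "d < a" "a < c" | "d < a" "a < c" "c < b"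
    unfolding cyclically_interleaved_def by blast
  then show ?thesis
  proof cases
    case 1
    then show ?thesis using assms cyclically_interleaved_cyc_shift_sorted by blast
  next
    case 2
    then show ?thesis using assms cyclically_interleaved_cyc_shift_sorted[of c b d a]
      unfolding cyclically_interleaved_def by blast
  next
    case 3
    then show ?thesis using assms cyclically_interleaved_cyc_shift_sorted[of b d a c]
      unfolding cyclically_interleaved_def by blast
  next
    case 4
    then show ?thesis using assms cyclically_interleaved_cyc_shift_sorted[of d a c b]
      unfolding cyclically_interleaved_def by blast
  qed
qed

lemma cyclically_interleaved_imp_crossing:
  assumes "cyclically_interleaved (f a) (f c) (f b) (f d)"
  shows "crossing f {a, b} {c, d} \<or> crossing f {c, d} {a, b}"
  using assms unfolding cyclically_interleaved_def
proof (elim disjE)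
  assume "f a < f c \<and> f c < f b \<and> f b < f d"
  then have "crossing f {a, b} {c, d}"
    unfolding crossing_def by blast
  then show ?thesis ..
next
  assume "f c < f b \<and> f b < f d \<and> f d < f a"
  then have "crossing f {c, d} {b, a}"
    unfolding crossing_def by blast
  then show ?thesis by (simp add: insert_commute)
next
  assume "f b < f d \<and> f d < f a \<and> f a < f c"
  then have "crossing f {b, a} {d, c}"
    unfolding crossing_def by blast
  then show ?thesis by (simp add: insert_commute)
next
  assume "f d < f a \<and> f a < f c \<and> f c < f b"
  then have "crossing f {d, c} {a, b}"
    unfolding crossing_def by blast
  then show ?thesis by (simp add: insert_commute)
qed

lemma outerplanar_embedding_cyc_shift:
  assumes emb: "outerplanar_embedding V E f" and p: "p < card V"
  shows "outerplanar_embedding V E (cyc_shift (card V) p \<circ> f)"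
  unfolding outerplanar_embedding_def
proof (intro conjI ballI notI)
  define n where "n = card V"
  have graph: "graph V E" and bij: "bij_betw f V {0..<n}"
    and noncross: "\<forall>e1\<in>E. \<forall>e2\<in>E. \<not> crossing f e1 e2"
    using emb unfolding outerplanar_embedding_def n_def by auto
  show "graph V E" by (fact graph)
  show "bij_betw (cyc_shift (card V) p \<circ> f) V {0..<card V}"
    using bij_betw_trans[OF bij bij_betw_cyc_shift] p unfolding n_def by simp
  have f_less: "f z < n" if "z \<in> V" for z
    using bij that bij_betwE by fastforce
  fix e1 e2 assume e: "e1 \<in> E" "e2 \<in> E"
    and "crossing (cyc_shift (card V) p \<circ> f) e1 e2"
  then obtain a b c d where abcd: "e1 = {a, b}" "e2 = {c, d}"
    and "cyc_shift n p (f a) < cyc_shift n p (f c)" "cyc_shift n p (f c) < cyc_shift n p (f b)"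
      "cyc_shift n p (f b) < cyc_shift n p (f d)"
    unfolding crossing_def n_def by auto
  then have shifted: "cyclically_interleaved (cyc_shift n p (f a)) (cyc_shift n p (f c))
      (cyc_shift n p (f b)) (cyc_shift n p (f d))"
    unfolding cyclically_interleaved_def by blast
  have V: "a \<in> V" "b \<in> V" "c \<in> V" "d \<in> V"
    using abcd graph_edge_subset[OF graph e(1)] graph_edge_subset[OF graph e(2)] by auto
  have inverse: "cyc_shift n (n - p) (cyc_shift n p (f z)) = f z" and less: "cyc_shift n p (f z) < n"
    if "z \<in> V" for z
    using cyc_shift_inverse cyc_shift_less f_less[OF that] p unfolding n_def by auto
  have "cyclically_interleaved (f a) (f c) (f b) (f d)"
    using cyclically_interleaved_cyc_shift[OF _ less[OF V(1)] less[OF V(2)] less[OF V(3)] less[OF V(4)] shifted,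
        of "n - p"]
    by (simp add: inverse V)
  then have "crossing f e1 e2 \<or> crossing f e2 e1"
    using cyclically_interleaved_imp_crossing[of f a c b d] abcd by simp
  then show False
    using noncross e by blast
qed

lemma side_without_cyc_shift:
  assumes "\<forall>z\<in>V. f z < card V" "p < card V" "x \<in> V" "w \<in> V" "y \<in> V"
  shows "side_without V (cyc_shift (card V) p \<circ> f) x w y = side_without V f x w y"
proof -
  have "{z \<in> V. cyc_shift (card V) p (f z) \<in> open_arc (card V) (cyc_shift (card V) p (f a)) (cyc_shift (card V) p (f b))}
      = {z \<in> V. f z \<in> open_arc (card V) (f a) (f b)}" if "a \<in> V" "b \<in> V" for a b
    using open_arc_cyc_shift assms that by auto
  then show ?thesis
    using assms unfolding side_without_def Let_def by simp
qed

lemma mem_open_arc_iff: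
  assumes "a < n" "b < n" "c < n"
  shows "b \<in> open_arc n a c \<longleftrightarrow> a < b \<and> b < c \<or> c < a \<and> (a < b \<or> b < c)"
  using assms by (auto simp: open_arc_def int_diff_mod)

section \<open>Segments at an outer edge\<close>

locale origin_edge =
  fixes V :: "'a set" and E :: "'a set set" and f :: "'a \<Rightarrow> nat" and u v :: 'a
  assumes maximal: "maximal_outerplanar V E"
    and embedding: "outerplanar_embedding V E f"
    and u_pos: "f u = 0" and v_pos: "f v = 1" and uv_edge: "{u, v} \<in> E"
begin

lemma graph: "graph V E"
  using embedding unfolding outerplanar_embedding_def by simp

lemma bij: "bij_betw f V {0..<card V}"
  using embedding unfolding outerplanar_embedding_def by simp

lemma f_less: "z \<in> V \<Longrightarrow> f z < card V"
  using bij bij_betwE by fastforce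

lemma f_eq_iff: "y \<in> V \<Longrightarrow> z \<in> V \<Longrightarrow> f y = f z \<longleftrightarrow> y = z"
  using bij unfolding bij_betw_def inj_on_def by blast

lemma u_in: "u \<in> V" and v_in: "v \<in> V"
  using graph_edge_vertices[OF graph uv_edge] by auto

lemma f_eq_0_iff: "z \<in> V \<Longrightarrow> f z = 0 \<longleftrightarrow> z = u"
  using f_eq_iff[OF _ u_in] u_pos by auto

lemma f_eq_1_iff: "z \<in> V \<Longrightarrow> f z = 1 \<longleftrightarrow> z = v"
  using f_eq_iff[OF _ v_in] v_pos by auto

lemma f_mem_open_arc_iff:
  "z \<in> V \<Longrightarrow> a \<in> V \<Longrightarrow> b \<in> V \<Longrightarrow> f z \<in> open_arc (card V) (f a) (f b) \<longleftrightarrow>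
     f a < f z \<and> f z < f b \<or> f b < f a \<and> (f a < f z \<or> f z < f b)"
  using mem_open_arc_iff[OF f_less f_less f_less] by blast

lemma two_le_f: "z \<in> V \<Longrightarrow> z \<noteq> u \<Longrightarrow> z \<noteq> v \<Longrightarrow> 2 \<le> f z"
  using f_eq_iff[OF _ u_in] f_eq_iff[OF _ v_in] u_pos v_pos by fastforce

lemma no_crossing:
  assumes "{a, b} \<in> E" "{c, d} \<in> E" "f a < f c" "f c < f b" "f b < f d"
  shows False
  using embedding assms unfolding outerplanar_embedding_def crossing_def by blast

lemma not_crossing_around_origin: "\<not> crossing f e {u, x}"
  using u_pos unfolding crossing_def by (auto simp: doubleton_eq_iff)

lemma crossing_from_origin:
  assumes "crossing f {u, x} {c, d}" "{v, x} \<in> E" "{c, d} \<in> E"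
  shows "c = v \<and> f x < f d \<or> d = v \<and> f x < f c"
proof -
  obtain a b c' d' where ab: "{u, x} = {a, b}" and cd: "{c, d} = {c', d'}"
    and less: "f a < f c'" "f c' < f b" "f b < f d'"
    using assms(1) unfolding crossing_def by blast
  have "a = u" "b = x"
    using ab less u_pos by (auto simp: doubleton_eq_iff)
  have "c' = v"
  proof (rule ccontr)
    assume "c' \<noteq> v"
    moreover have "c' \<in> V" "c' \<noteq> u"
      using graph_edge_subset[OF graph assms(3)] cd less \<open>a = u\<close> u_pos by auto
    ultimately have "f v < f c'"
      using two_le_f v_pos by fastforce
    then show False
      using no_crossing[OF assms(2), of c' d'] assms(3) cd less \<open>b = x\<close> by simp
  qed
  then show ?thesis
    using cd less \<open>b = x\<close> by (auto simp: doubleton_eq_iff)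
qed

text \<open>This is where maximality enters: the chord from u to the last neighbour x of v
  crosses no edge, so it must already be an edge.\<close>
lemma edge_to_last_neighbour:
  assumes vx: "{v, x} \<in> E" and "x \<noteq> u"
    and last: "\<And>y. {v, y} \<in> E \<Longrightarrow> y \<noteq> u \<Longrightarrow> f y \<le> f x"
  shows "{u, x} \<in> E"
proof (rule ccontr)
  assume new: "{u, x} \<notin> E"
  have x_in: "x \<in> V"
    using graph_edge_vertices[OF graph vx] by simp
  have "outerplanar V (insert {u, x} E)"
    unfolding outerplanar_def outerplanar_embedding_def
  proof (intro exI[of _ f] conjI ballI notI)
    show "graph V (insert {u, x} E)"
      using graph u_in x_in \<open>x \<noteq> u\<close> unfolding graph_def by auto
    show "bij_betw f V {0..<card V}"
      by (fact bij)
    fix e1 e2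
    assume e: "e1 \<in> insert {u, x} E" "e2 \<in> insert {u, x} E" and cross: "crossing f e1 e2"
    have "e2 \<noteq> {u, x}"
      using cross not_crossing_around_origin by blast
    then have e2: "e2 \<in> E"
      using e by blast
    show False
    proof (cases "e1 = {u, x}")
      case True
      obtain c d where "e2 = {c, d}"
        using e2 graph unfolding graph_def by blast
      moreover have "u \<noteq> c" "u \<noteq> d"
        using cross \<open>e2 = {c, d}\<close> True u_pos unfolding crossing_def by (auto simp: doubleton_eq_iff)
      ultimately consider "{v, d} \<in> E" "d \<noteq> u" "f x < f d" | "{v, c} \<in> E" "c \<noteq> u" "f x < f c"
        using crossing_from_origin[of x c d] cross True vx e2 by (auto simp: insert_commute)
      then show False
        by cases (auto dest: last)
    next
      case False
      then show False
        using e e2 cross embedding unfolding outerplanar_embedding_def by blast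
    qed
  qed
  moreover have "\<not> outerplanar V (insert {u, x} E)"
    using maximal u_in x_in \<open>x \<noteq> u\<close> new unfolding maximal_outerplanar_def by auto
  ultimately show False
    by contradiction
qed

lemma last_neighbour_exists:
  assumes "2 \<le> degree E v"
  obtains x where "{v, x} \<in> E" "x \<noteq> u" "\<And>y. {v, y} \<in> E \<Longrightarrow> y \<noteq> u \<Longrightarrow> f y \<le> f x"
proof -
  define N where "N = {y. {v, y} \<in> E \<and> y \<noteq> u}"
  have "N \<subseteq> V"
    unfolding N_def using graph_edge_vertices[OF graph] by blast
  then have fin: "finite N"
    using graph finite_subset unfolding graph_def by blast
  have "N \<noteq> {}"
  proof
    assume "N = {}"
    then have "{y. {v, y} \<in> E} \<subseteq> {u}"
      unfolding N_def by blast
    then have "degree E v \<le> 1"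
      unfolding degree_def using card_mono[of "{u}"] by fastforce
    with assms show False by simp
  qed
  obtain x where "x \<in> N" "f x = Max (f ` N)"
    using Max_in[of "f ` N"] fin \<open>N \<noteq> {}\<close> by fastforce
  then show thesis
    using that fin unfolding N_def by auto
qed

lemma common_neighbour_unique:
  assumes "{u, x} \<in> E" "{v, x} \<in> E" "{u, y} \<in> E" "{v, y} \<in> E"
  shows "y = x"
proof -
  have V: "x \<in> V" "y \<in> V" "x \<noteq> u" "x \<noteq> v" "y \<noteq> u" "y \<noteq> v"
    using assms graph_edge_vertices[OF graph] by blast+
  have "2 \<le> f x" "2 \<le> f y"
    using two_le_f V by auto
  then have "\<not> f y < f x" "\<not> f x < f y"
    using no_crossing[OF assms(3) assms(2)] no_crossing[OF assms(1) assms(4)] u_pos v_pos by auto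
  then show ?thesis
    using f_eq_iff V by (metis linorder_neqE_nat)
qed

lemma Delta_eq:
  assumes "{u, x} \<in> E" "{v, x} \<in> E"
  shows "Delta V E u v = x" "Delta V E v u = x"
proof -
  have "x \<in> V"
    using graph_edge_vertices[OF graph assms(1)] by simp
  then show "Delta V E u v = x" "Delta V E v u = x"
    unfolding Delta_def using assms common_neighbour_unique by (auto intro!: the_equality)
qed

context
  fixes x assumes ux: "{u, x} \<in> E" and vx: "{v, x} \<in> E"
begin

lemma x_in: "x \<in> V" and two_le_fx: "2 \<le> f x"
  using graph_edge_vertices[OF graph ux] graph_edge_vertices[OF graph vx] two_le_f by auto

lemma seg_V_u: "seg_V V E f u v = {z \<in> V. f z = 0 \<or> f x \<le> f z}"
proof -
  have "v \<in> {z \<in> V. f z \<in> open_arc (card V) (f u) (f x)}"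
    using f_mem_open_arc_iff[OF v_in u_in x_in] v_in u_pos v_pos two_le_fx by auto
  have "side_without V f u x v = {z \<in> V. f z \<in> open_arc (card V) (f x) (f u)}"
    unfolding side_without_def Let_def if_P[OF \<open>v \<in> _\<close>] by (rule refl)
  also have "\<dots> = {z \<in> V. f x < f z}"
    using f_mem_open_arc_iff[OF _ x_in u_in] u_pos two_le_fx by auto
  finally have side: "side_without V f u x v = {z \<in> V. f x < f z}" .
  show ?thesis
  proof (intro set_eqI iffI)
    fix z assume "z \<in> seg_V V E f u v"
    then show "z \<in> {z \<in> V. f z = 0 \<or> f x \<le> f z}"
      unfolding seg_V_def Delta_eq[OF ux vx] side using u_in x_in u_pos by auto
  next
    fix z assume z: "z \<in> {z \<in> V. f z = 0 \<or> f x \<le> f z}"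
    then have "z = u \<or> z = x \<or> f x < f z"
      using f_eq_0_iff[of z] f_eq_iff[of z x] x_in by (cases "f x < f z") auto
    then show "z \<in> seg_V V E f u v"
      unfolding seg_V_def Delta_eq[OF ux vx] side using z by auto
  qed
qed

lemma seg_V_v: "seg_V V E f v u = {z \<in> V. 1 \<le> f z \<and> f z \<le> f x}"
proof -
  have "u \<notin> {z \<in> V. f z \<in> open_arc (card V) (f v) (f x)}"
    using f_mem_open_arc_iff[OF u_in v_in x_in] u_pos v_pos by auto
  have "side_without V f v x u = {z \<in> V. f z \<in> open_arc (card V) (f v) (f x)}"
    unfolding side_without_def Let_def if_not_P[OF \<open>u \<notin> _\<close>] by (rule refl)
  also have "\<dots> = {z \<in> V. 1 < f z \<and> f z < f x}"
    using f_mem_open_arc_iff[OF _ v_in x_in] v_pos two_le_fx by auto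
  finally have side: "side_without V f v x u = {z \<in> V. 1 < f z \<and> f z < f x}" .
  show ?thesis
  proof (intro set_eqI iffI)
    fix z assume "z \<in> seg_V V E f v u"
    then show "z \<in> {z \<in> V. 1 \<le> f z \<and> f z \<le> f x}"
      unfolding seg_V_def Delta_eq[OF ux vx] side using v_in x_in v_pos two_le_fx by auto
  next
    fix z assume z: "z \<in> {z \<in> V. 1 \<le> f z \<and> f z \<le> f x}"
    then have "z = v \<or> z = x \<or> 1 < f z \<and> f z < f x"
      using f_eq_1_iff[of z] f_eq_iff[of z x] x_in by (cases "f z = 1"; cases "f z = f x") auto
    then show "z \<in> seg_V V E f v u"
      unfolding seg_V_def Delta_eq[OF ux vx] side using z by auto
  qed
qed

lemma edge_across_is_uv:
  assumes "{a, b} \<in> E" "f a = 0 \<or> f x < f a" "1 \<le> f b" "f b < f x"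
  shows "a = u \<and> b = v"
proof -
  have V: "a \<in> V" "b \<in> V"
    using graph_edge_vertices[OF graph assms(1)] by auto
  show ?thesis
  proof (cases "f a = 0")
    case True
    then have "a = u"
      using f_eq_iff[OF V(1) u_in] u_pos by simp
    moreover have "f b = 1"
      using no_crossing[of u b v x] assms \<open>a = u\<close> vx u_pos v_pos by fastforce
    ultimately show ?thesis
      using f_eq_iff[OF V(2) v_in] v_pos by simp
  next
    case False
    then have "{b, a} \<in> E" "f x < f a"
      using assms by (auto simp: insert_commute)
    then show ?thesis
      using no_crossing[OF ux] assms u_pos by fastforce
  qed
qed

lemma edges_split:
  "\<forall>e\<in>E. e \<subseteq> seg_V V E f u v \<or> e \<subseteq> seg_V V E f v u \<or> e = {u, v}"
proof
  fix e assume "e \<in> E"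
  then obtain a b where e: "e = {a, b}" "a \<in> V" "b \<in> V"
    using graph unfolding graph_def by blast
  have "{a, b} \<in> E" "{b, a} \<in> E"
    using \<open>e \<in> E\<close> e by (auto simp: insert_commute)
  then show "e \<subseteq> seg_V V E f u v \<or> e \<subseteq> seg_V V E f v u \<or> e = {u, v}"
    unfolding seg_V_u seg_V_v e(1) using e edge_across_is_uv by fastforce
qed

lemma split_graph: "split_graph V E (seg_V V E f u v) (seg_V V E f v u) u v x"
  unfolding split_graph_def
proof (intro conjI)
  show "seg_V V E f u v \<inter> seg_V V E f v u = {x}"
    unfolding seg_V_u seg_V_v using x_in f_eq_iff two_le_fx by fastforce
qed (use graph edges_split ux vx uv_edge u_in v_in u_pos v_pos two_le_fx in \<open>auto simp: seg_V_u seg_V_v\<close>)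

end

end

lemma split_graph_successor_edge:
  assumes maximal: "maximal_outerplanar V E" and embedding: "outerplanar_embedding V E f"
    and uv: "{u, v} \<in> E" and succ: "f v = (f u + 1) mod card V" and deg: "2 \<le> degree E v"
  shows "Delta V E v u = Delta V E u v"
    and "split_graph V E (seg_V V E f u v) (seg_V V E f v u) u v (Delta V E u v)"
proof -
  define n where "n = card V"
  define g where "g = cyc_shift n (f u) \<circ> f"
  have graph: "graph V E" and bij: "bij_betw f V {0..<n}"
    using embedding unfolding outerplanar_embedding_def n_def by auto
  have V: "u \<in> V" "v \<in> V" "u \<noteq> v"
    using graph_edge_vertices[OF graph uv] by auto
  have f_less: "\<forall>z\<in>V. f z < n"
    using bij bij_betwE by fastforce
  then have p: "f u < n"
    using V by blast
  have "g v = 1"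
  proof (cases "f u + 1 < n")
    case True
    then show ?thesis
      using succ unfolding g_def n_def cyc_shift_def by simp
  next
    case False
    then have "f u + 1 = n"
      using p by simp
    moreover have "2 \<le> n"
      using card_mono[of V "{u, v}"] graph V unfolding graph_def n_def by auto
    moreover have "f v = 0"
      using succ \<open>f u + 1 = n\<close> unfolding n_def by simp
    ultimately show ?thesis
      unfolding g_def cyc_shift_def by simp
  qed
  moreover have "g u = 0"
    unfolding g_def cyc_shift_def by simp
  moreover have "outerplanar_embedding V E g"
    using outerplanar_embedding_cyc_shift[OF embedding p[unfolded n_def]] unfolding g_def n_def .
  ultimately interpret g: origin_edge V E g u v
    using maximal uv by unfold_locales
  obtain x where vx: "{v, x} \<in> E" and "x \<noteq> u"
    and last: "\<And>y. {v, y} \<in> E \<Longrightarrow> y \<noteq> u \<Longrightarrow> g y \<le> g x"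
    using g.last_neighbour_exists[OF deg] by blast
  have ux: "{u, x} \<in> E"
    using g.edge_to_last_neighbour[OF vx \<open>x \<noteq> u\<close> last] .
  have x_in: "x \<in> V"
    using graph_edge_vertices[OF graph vx] by simp
  show "Delta V E v u = Delta V E u v"
    using g.Delta_eq[OF ux vx] by simp
  have "seg_V V E g a b = seg_V V E f a b" if "a \<in> V" "b \<in> V" "Delta V E a b = x" for a b
    unfolding seg_V_def g_def n_def
    using side_without_cyc_shift[of V f "f u" a x b] f_less p that x_in unfolding n_def by simp
  then show "split_graph V E (seg_V V E f u v) (seg_V V E f v u) u v (Delta V E u v)"
    using g.split_graph[OF ux vx] g.Delta_eq[OF ux vx] V by simp
qed

lemma split_graph_outer_edge:
  assumes "maximal_outerplanar V E" "outerplanar_embedding V E f" "outer_edge V E f u v"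
    and "2 \<le> degree E u" "2 \<le> degree E v"
  shows "split_graph V E (seg_V V E f u v) (seg_V V E f v u) u v (Delta V E u v)"
proof -
  have uv: "{u, v} \<in> E" "{v, u} \<in> E"
    using assms(3) unfolding outer_edge_def by (auto simp: insert_commute)
  consider "f v = (f u + 1) mod card V" | "f u = (f v + 1) mod card V"
    using assms(3) unfolding outer_edge_def by blast
  then show ?thesis
  proof cases
    case 1
    then show ?thesis
      using split_graph_successor_edge(2)[OF assms(1,2) uv(1) _ assms(5)] by simp
  next
    case 2
    then have "split_graph V E (seg_V V E f v u) (seg_V V E f u v) v u (Delta V E u v)"
      using split_graph_successor_edge[OF assms(1,2) uv(2) _ assms(4)] by simp
    then show ?thesis
      by (rule split_graph.swap)
  qed
qed

theorem lemma1:
  fixes V :: "'a set" and E :: "'a set set" and f :: "'a \<Rightarrow> nat" and u v :: 'a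
  assumes "maximal_outerplanar V E"
    and "outerplanar_embedding V E f"
    and "card V \<ge> 4"
    and "outer_edge V E f u v"
    and "degree E u > 2" and "degree E v > 2"
  shows "let w = Delta V E u v;
             Vu = seg_V V E f u v; Eu = seg_E V E f u v;
             Vv = seg_V V E f v u; Ev = seg_E V E f v u
         in int (mvc V E) =
            min (min (int (mvc_S Vu Eu {w}) + int (mvc_S Vv Ev {v, w}) - 1)
                     (int (mvc_S Vu Eu {u, w}) + int (mvc_S Vv Ev {w}) - 1))
                (int (mvc Vu Eu) + int (mvc Vv Ev))"
proof -
  have "split_graph V E (seg_V V E f u v) (seg_V V E f v u) u v (Delta V E u v)"
    using split_graph_outer_edge[OF assms(1,2,4)] assms(5,6) by simp
  then show ?thesis
    unfolding Let_def seg_E_def by (rule split_graph.mvc_eq)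
qed

end
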